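(* Let $n\ge3$ be an integer, let $(\eta_{ab})$ be a non-degenerate symmetric complex $n\times n$ matrix with inverse $(\eta^{ab})$, let $\mathscr{F}=\mathbb{C}[x^1,\dots,x^n]$ and $\mathscr{F}^+=\{\phi\in\mathscr{F}:\sum_{a,b}\eta^{ab}\partial_a\partial_b\phi=0\}$. Let $Z^\circ$ be the $\mathbb{C}$-algebra of operators on $\mathscr{F}$ generated by $$H=-\tfrac12\sum_a(x^a\partial_a+\partial_ax^a),\qquad \partial_a,\qquad \tilde x^a=x^a+\frac1{2H+4}\sum_{b,c}\eta_{bc}x^bx^c\,\partial^a\qquad(1\le a\le n).$$ Then each of these operators maps $\mathscr{F}^+$ into itself, so $\mathscr{F}^+$ is a $Z^\circ$-module, and $\mathscr{F}^+$ is irreducible as a $Z^\circ$-module.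
   Context: $\partial_a=\partial/\partial x^a$, $\partial^a=\sum_b\eta^{ab}\partial_b$. $H$ acts on homogeneous polynomials of degree $d$ by the scalar $-d-\frac n2$, and $(2H+4)^{-1}$ denotes the inverse of $2H+4$ on the (homogeneous, degree $\ge2$ when nonzero) polynomial $\sum_{b,c}\eta_{bc}x^bx^c\partial^a\psi$; explicitly $\tilde x^a\psi=x^a\psi+\frac1{2-2d-n}\sum_{b,c}\eta_{bc}x^bx^c\partial^a\psi$ for $\psi$ homogeneous of degree $d\ge1$ and $\tilde x^a\psi=x^a\psi$ for constant $\psi$. Irreducible means the only $Z^\circ$-invariant subspaces of $\mathscr{F}^+$ are $0$ and $\mathscr{F}^+$. *)

theory Defs
  imports "HOL-Analysis.Analysis"
begin

text \<open>A polynomial in C[x^a : a in 'n] is represented by its coefficient function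
  c :: ('n => nat) => complex (exponent vector to coefficient); the polynomial
  space F is the set of finitely supported coefficient functions.
  Operators act on all coefficient functions.\<close>

type_synonym 'n coeffs = "('n \<Rightarrow> nat) \<Rightarrow> complex"

definition polys :: "'n coeffs set" where
  "polys = {c. finite {m. c m \<noteq> 0}}"

definition mdeg :: "('n::finite \<Rightarrow> nat) \<Rightarrow> nat" where
  "mdeg m = (\<Sum>i\<in>UNIV. m i)"

definition Xop :: "'n \<Rightarrow> 'n coeffs \<Rightarrow> 'n coeffs" where
  "Xop a c = (\<lambda>m. if 0 < m a then c (m(a := m a - 1)) else 0)"

definition Dop :: "'n \<Rightarrow> 'n coeffs \<Rightarrow> 'n coeffs" where
  "Dop a c = (\<lambda>m. of_nat (m a + 1) * c (m(a := m a + 1)))"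

definition Dup :: "complex^'n^'n \<Rightarrow> 'n::finite \<Rightarrow> 'n coeffs \<Rightarrow> 'n coeffs" where
  "Dup eta a c = (\<lambda>m. \<Sum>b\<in>UNIV. (matrix_inv eta $ a $ b) * Dop b c m)"

definition Hop :: "'n::finite coeffs \<Rightarrow> 'n coeffs" where
  "Hop c = (\<lambda>m. - (1/2) * (\<Sum>a\<in>UNIV. Xop a (Dop a c) m + Dop a (Xop a c) m))"

definition Qop :: "complex^'n^'n \<Rightarrow> 'n::finite coeffs \<Rightarrow> 'n coeffs" where
  "Qop eta f = (\<lambda>m. \<Sum>b\<in>UNIV. \<Sum>c\<in>UNIV. eta $ b $ c * Xop b (Xop c f) m)"

text \<open>(2H+4)^{-1}: 2H+4 acts on degree-d monomials by 4 - 2d - n; its inverse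
  divides by this scalar (only applied to polynomials on which it is nonzero).\<close>
definition R2H4inv :: "'n::finite coeffs \<Rightarrow> 'n coeffs" where
  "R2H4inv f = (\<lambda>m. f m / (4 - 2 * of_nat (mdeg m) - of_nat CARD('n)))"

definition Xtil :: "complex^'n^'n \<Rightarrow> 'n::finite \<Rightarrow> 'n coeffs \<Rightarrow> 'n coeffs" where
  "Xtil eta a f = (\<lambda>m. Xop a f m + R2H4inv (Qop eta (Dup eta a f)) m)"

definition Lap :: "complex^'n^'n \<Rightarrow> 'n::finite coeffs \<Rightarrow> 'n coeffs" where
  "Lap eta f = (\<lambda>m. \<Sum>a\<in>UNIV. \<Sum>b\<in>UNIV. matrix_inv eta $ a $ b * Dop a (Dop b f) m)"

definition Fplus :: "complex^'n^'n \<Rightarrow> 'n::finite coeffs set" where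
  "Fplus eta = {f \<in> polys. Lap eta f = (\<lambda>m. 0)}"

inductive_set Zalg :: "complex^'n^'n \<Rightarrow> ('n::finite coeffs \<Rightarrow> 'n coeffs) set"
  for eta :: "complex^'n^'n" where
  gen_H: "Hop \<in> Zalg eta"
| gen_D: "Dop a \<in> Zalg eta"
| gen_X: "Xtil eta a \<in> Zalg eta"
| unit: "(\<lambda>f. f) \<in> Zalg eta"
| add: "S \<in> Zalg eta \<Longrightarrow> T \<in> Zalg eta \<Longrightarrow> (\<lambda>f m. S f m + T f m) \<in> Zalg eta"
| smult: "T \<in> Zalg eta \<Longrightarrow> (\<lambda>f m. k * T f m) \<in> Zalg eta"
| comp: "S \<in> Zalg eta \<Longrightarrow> T \<in> Zalg eta \<Longrightarrow> (\<lambda>f. S (T f)) \<in> Zalg eta"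

definition csubspace :: "'n coeffs set \<Rightarrow> bool" where
  "csubspace W \<longleftrightarrow> (\<lambda>m. 0) \<in> W \<and> (\<forall>f\<in>W. \<forall>g\<in>W. (\<lambda>m. f m + g m) \<in> W)
     \<and> (\<forall>k. \<forall>f\<in>W. (\<lambda>m. k * f m) \<in> W)"

end

theory Submission
  imports Defs
begin

text \<open>On monomials of degree \<open>d\<close>, \<open>H\<close> and \<open>(2H+4)\<^sup>-\<^sup>1\<close> act by scalars, while the
  Laplacian \<open>\<Delta>\<close> commutes with every \<open>\<partial>\<^sub>a\<close> and satisfies \<open>[\<Delta>, x\<^sup>c] = 2\<partial>\<^sup>c\<close> and
  \<open>[\<Delta>, Q] = 4E + 2n\<close>, where \<open>Q = \<eta>\<^sub>b\<^sub>c x\<^sup>b x\<^sup>c\<close> and \<open>E\<close> is the Euler operator.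
  For harmonic \<open>f\<close> the polynomial \<open>\<psi> = \<partial>\<^sup>c f\<close> is harmonic too, so \<open>\<Delta>(x\<^sup>c f) = 2\<psi>\<close>
  and \<open>\<Delta>((2H+4)\<^sup>-\<^sup>1 Q\<psi>) = -2\<psi>\<close>: the two summands of \<open>Xtil eta c f\<close> cancel under \<open>\<Delta>\<close>.

  For irreducibility, \<open>\<Sum>\<^sub>a Xtil eta a (\<partial>\<^sub>a f) = E f\<close> for harmonic \<open>f\<close>, because the
  correction terms add up to \<open>(2H+4)\<^sup>-\<^sup>1 Q \<Delta>f = 0\<close>. A nonzero invariant subspace \<open>W\<close>
  contains the constants: differentiate a nonzero element until it becomes constant. Then every
  harmonic \<open>f\<close> of degree at most \<open>d\<close> lies in \<open>W\<close> by induction on \<open>d\<close>: its derivatives do,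
  hence so does \<open>E f\<close>; and \<open>(E - d) f\<close> is harmonic of smaller degree, so
  \<open>d f = E f - (E - d) f \<in> W\<close>.\<close>

lemma mdeg_fun_upd: "mdeg (m(a := v)) + m a = mdeg m + v"
proof -
  have "mdeg (m(a := v)) = v + (\<Sum>i\<in>UNIV - {a}. m i)"
    and "mdeg m = m a + (\<Sum>i\<in>UNIV - {a}. m i)"
    unfolding mdeg_def by (simp_all add: sum.remove[of UNIV a])
  then show ?thesis by simp
qed

lemma mdeg_incr [simp]: "mdeg (m(a := Suc (m a))) = Suc (mdeg m)"
  using mdeg_fun_upd[of m a "Suc (m a)"] by simp

lemma mdeg_eq_0_iff: "mdeg m = 0 \<longleftrightarrow> m = (\<lambda>_. 0)"
  by (auto simp: mdeg_def fun_eq_iff)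

lemma polys_mult: "f \<in> polys \<Longrightarrow> (\<lambda>m. h m * f m) \<in> polys"
  unfolding polys_def by (auto elim: rev_finite_subset)

lemma polys_sum:
  assumes "\<And>i. i \<in> A \<Longrightarrow> F i \<in> polys"
  shows "(\<lambda>m. \<Sum>i\<in>A. F i m) \<in> polys"
proof (cases "finite A")
  case True
  have "{m. (\<Sum>i\<in>A. F i m) \<noteq> 0} \<subseteq> (\<Union>i\<in>A. {m. F i m \<noteq> 0})"
    by (auto intro: ccontr)
  moreover have "finite (\<Union>i\<in>A. {m. F i m \<noteq> 0})"
    using True assms by (auto simp: polys_def)
  ultimately show ?thesis
    unfolding polys_def by (auto elim: rev_finite_subset)
qed (simp add: polys_def)

lemma polys_add: "f \<in> polys \<Longrightarrow> g \<in> polys \<Longrightarrow> (\<lambda>m. f m + g m) \<in> polys"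
  using polys_sum[of "{True, False}" "\<lambda>i. if i then f else g"] by simp

lemma polys_if_support_image:
  assumes "f \<in> polys" and "{m. g m \<noteq> 0} \<subseteq> h ` {m. f m \<noteq> 0}"
  shows "g \<in> polys"
  using assms unfolding polys_def by (auto elim: finite_subset)

lemma polys_Dop: "f \<in> polys \<Longrightarrow> Dop a f \<in> polys"
  by (erule polys_if_support_image[where h = "\<lambda>k. k(a := k a - 1)"])
    (auto simp: Dop_def intro!: image_eqI[where x = "_(a := Suc (_ a))"])

lemma polys_Xop: "f \<in> polys \<Longrightarrow> Xop a f \<in> polys"
  by (erule polys_if_support_image[where h = "\<lambda>k. k(a := Suc (k a))"])
    (auto simp: Xop_def split: if_splits intro!: image_eqI[where x = "_(a := _ a - 1)"])

definition degree_below :: "nat \<Rightarrow> 'n::finite coeffs \<Rightarrow> bool" where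
  "degree_below d f \<longleftrightarrow> (\<forall>m. f m \<noteq> 0 \<longrightarrow> mdeg m < d)"

lemma polys_degree_below: "f \<in> polys \<Longrightarrow> \<exists>d. degree_below d f"
  unfolding polys_def degree_below_def
  by (metis (mono_tags, lifting) finite_imageI finite_nat_set_iff_bounded imageI mem_Collect_eq)

lemma degree_below_0: "degree_below 0 f \<longleftrightarrow> f = (\<lambda>m. 0)"
  by (auto simp: degree_below_def fun_eq_iff)

lemma Xop_add: "Xop a (\<lambda>m. f m + g m) = (\<lambda>m. Xop a f m + Xop a g m)"
  and Xop_mult: "Xop a (\<lambda>m. k * f m) = (\<lambda>m. k * Xop a f m)"
  and Xop_sum: "Xop a (\<lambda>m. \<Sum>i\<in>A. F i m) = (\<lambda>m. \<Sum>i\<in>A. Xop a (F i) m)"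
  and Xop_zero: "Xop a (\<lambda>m. 0) = (\<lambda>m. 0)"
  by (simp_all add: Xop_def fun_eq_iff)

lemma Dop_add: "Dop a (\<lambda>m. f m + g m) = (\<lambda>m. Dop a f m + Dop a g m)"
  and Dop_mult: "Dop a (\<lambda>m. k * f m) = (\<lambda>m. k * Dop a f m)"
  and Dop_sum: "Dop a (\<lambda>m. \<Sum>i\<in>A. F i m) = (\<lambda>m. \<Sum>i\<in>A. Dop a (F i) m)"
  and Dop_zero: "Dop a (\<lambda>m. 0) = (\<lambda>m. 0)"
  by (simp_all add: Dop_def fun_eq_iff algebra_simps sum_distrib_left)

lemma Lap_add: "Lap eta (\<lambda>m. f m + g m) = (\<lambda>m. Lap eta f m + Lap eta g m)"
  and Lap_mult: "Lap eta (\<lambda>m. k * f m) = (\<lambda>m. k * Lap eta f m)"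
  and Lap_sum: "Lap eta (\<lambda>m. \<Sum>i\<in>A. F i m) = (\<lambda>m. \<Sum>i\<in>A. Lap eta (F i) m)"
  by (simp_all add: Lap_def Dop_add Dop_mult Dop_sum fun_eq_iff algebra_simps sum.distrib
      sum_distrib_left sum.swap[of _ UNIV A])

lemma Qop_sum: "Qop eta (\<lambda>m. \<Sum>i\<in>A. F i m) = (\<lambda>m. \<Sum>i\<in>A. Qop eta (F i) m)"
  and Qop_zero: "Qop eta (\<lambda>m. 0) = (\<lambda>m. 0)"
  by (simp_all add: Qop_def Xop_sum Xop_zero sum_distrib_left fun_eq_iff sum.swap[of _ UNIV A])

lemma Xop_Dop_same: "Xop a (Dop a f) m = of_nat (m a) * f m"
  by (auto simp: Xop_def Dop_def)

lemma Dop_Xop: "Dop a (Xop b f) = (\<lambda>m. Xop b (Dop a f) m + (if a = b then f m else 0))"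
proof (rule ext, cases "a = b")
  case True
  show "Dop a (Xop b f) m = Xop b (Dop a f) m + (if a = b then f m else 0)" for m
    using True by (cases "m a") (auto simp: Xop_def Dop_def algebra_simps fun_upd_idem)
qed (auto simp: Xop_def Dop_def fun_upd_twist)

lemma Dop_commute: "Dop a (Dop b f) = Dop b (Dop a f)"
  by (cases "a = b") (simp_all add: Dop_def fun_eq_iff fun_upd_twist)

lemma Lap_Dop: "Lap eta (Dop c f) = Dop c (Lap eta f)"
  by (simp add: Lap_def Dop_sum Dop_mult Dop_commute[of c])

lemma sum_Dup_Dop: "(\<lambda>m. \<Sum>a\<in>UNIV. Dup eta a (Dop a f) m) = Lap eta f"
  by (simp add: Dup_def Lap_def Dop_commute)

lemma sum_mult_delta:
  "(\<Sum>b\<in>(UNIV :: 'n::finite set). x b * (if b = c then y else 0)) = (x c * y :: 'a::semiring_0)"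
  by (simp add: if_distrib[of "(*) _"] cong: if_cong)

lemma Dup_Xop: "Dup eta b (Xop c f) = (\<lambda>m. Xop c (Dup eta b f) m + matrix_inv eta $ b $ c * f m)"
  by (simp add: Dup_def Dop_Xop distrib_left sum.distrib Xop_sum Xop_mult sum_mult_delta)

subsection \<open>Operators diagonal in the degree\<close>

definition scale_by_degree :: "(nat \<Rightarrow> complex) \<Rightarrow> 'n::finite coeffs \<Rightarrow> 'n coeffs" where
  "scale_by_degree s f = (\<lambda>m. s (mdeg m) * f m)"

lemma sum_Xop_Dop: "(\<lambda>m. \<Sum>a\<in>UNIV. Xop a (Dop a f) m) = scale_by_degree of_nat f"
  by (simp add: scale_by_degree_def Xop_Dop_same mdeg_def sum_distrib_right)

lemma Hop_eq_scale_by_degree: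
  "Hop (f :: 'n::finite coeffs) = scale_by_degree (\<lambda>d. - (of_nat d + of_nat CARD('n) / 2)) f"
proof
  fix m :: "'n \<Rightarrow> nat"
  have "Hop f m = - (1/2) * (\<Sum>a\<in>UNIV. (2 * of_nat (m a) + 1) * f m)"
    by (simp add: Hop_def Xop_Dop_same Dop_Xop algebra_simps)
  also have "\<dots> = - (1/2) * (2 * of_nat (mdeg m) + of_nat CARD('n)) * f m"
    by (simp add: mdeg_def sum_distrib_right[symmetric] sum.distrib sum_distrib_left[symmetric])
  finally show "Hop f m = scale_by_degree (\<lambda>d. - (of_nat d + of_nat CARD('n) / 2)) f m"
    by (simp add: scale_by_degree_def algebra_simps)
qed

lemma R2H4inv_eq_scale_by_degree:
  "R2H4inv (f :: 'n::finite coeffs) = scale_by_degree (\<lambda>d. 1 / (4 - 2 * of_nat d - of_nat CARD('n))) f"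
  by (simp add: R2H4inv_def scale_by_degree_def)

lemma Dop_scale_by_degree: "Dop a (scale_by_degree s f) = scale_by_degree (\<lambda>d. s (Suc d)) (Dop a f)"
  by (simp add: Dop_def scale_by_degree_def mult_ac)

lemma Lap_scale_by_degree:
  "Lap eta (scale_by_degree s f) = scale_by_degree (\<lambda>d. s (Suc (Suc d))) (Lap eta f)"
  by (simp add: Lap_def Dop_scale_by_degree) (simp add: scale_by_degree_def sum_distrib_left mult_ac)

lemma polys_scale_by_degree: "f \<in> polys \<Longrightarrow> scale_by_degree s f \<in> polys"
  unfolding scale_by_degree_def by (rule polys_mult)

lemma polys_Xtil: "f \<in> polys \<Longrightarrow> Xtil eta a f \<in> polys"
  unfolding Xtil_def R2H4inv_eq_scale_by_degree Qop_def Dup_def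
  by (intro polys_add polys_Xop polys_scale_by_degree polys_mult polys_sum polys_Dop)

subsection \<open>Harmonic polynomials\<close>

lemma Fplus_Dop: "f \<in> Fplus eta \<Longrightarrow> Dop a f \<in> Fplus eta"
  by (simp add: Fplus_def polys_Dop Lap_Dop Dop_zero)

lemma Fplus_scale_by_degree: "f \<in> Fplus eta \<Longrightarrow> scale_by_degree s f \<in> Fplus eta"
  by (simp add: Fplus_def polys_scale_by_degree Lap_scale_by_degree) (simp add: scale_by_degree_def)

lemma Fplus_Hop: "f \<in> Fplus eta \<Longrightarrow> Hop f \<in> Fplus eta"
  unfolding Hop_eq_scale_by_degree by (rule Fplus_scale_by_degree)

lemma harmonic_Dup: "Lap eta f = (\<lambda>m. 0) \<Longrightarrow> Lap eta (Dup eta a f) = (\<lambda>m. 0)"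
  by (simp add: Dup_def Lap_sum Lap_mult Lap_Dop Dop_zero)

lemma sum_Xtil_Dop_harmonic:
  assumes "Lap eta f = (\<lambda>m. 0)"
  shows "(\<lambda>m. \<Sum>a\<in>UNIV. Xtil eta a (Dop a f) m) = scale_by_degree of_nat f"
proof -
  have "(\<lambda>m. \<Sum>a\<in>UNIV. R2H4inv (Qop eta (Dup eta a (Dop a f))) m)
      = R2H4inv (Qop eta (\<lambda>m. \<Sum>a\<in>UNIV. Dup eta a (Dop a f) m))"
    by (simp add: R2H4inv_def Qop_sum sum_divide_distrib)
  also have "\<dots> = (\<lambda>m. 0)"
    by (simp add: sum_Dup_Dop assms Qop_zero R2H4inv_def)
  finally have "(\<lambda>m. \<Sum>a\<in>UNIV. R2H4inv (Qop eta (Dup eta a (Dop a f))) m) = (\<lambda>m. 0)" .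
  then show ?thesis
    by (simp add: Xtil_def sum.distrib fun_eq_iff flip: sum_Xop_Dop)
qed

locale nondegenerate_symmetric_form =
  fixes eta :: "complex^'n::finite^'n"
  assumes invertible: "invertible eta" and symmetric: "transpose eta = eta"
begin

lemma eta_matrix_inv: "eta ** matrix_inv eta = mat 1"
  using someI_ex[OF invertible[unfolded invertible_def]] by (simp add: matrix_inv_def)

lemma transpose_matrix_inv: "transpose (matrix_inv eta) = matrix_inv eta"
proof -
  have left_inv: "transpose (matrix_inv eta) ** eta = mat 1"
    using arg_cong[OF eta_matrix_inv, of transpose] symmetric by (simp add: matrix_transpose_mul)
  have "transpose (matrix_inv eta) = transpose (matrix_inv eta) ** eta ** matrix_inv eta"
    by (simp add: eta_matrix_inv flip: matrix_mul_assoc)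
  also have "\<dots> = matrix_inv eta"
    by (simp add: left_inv)
  finally show ?thesis .
qed

lemma eta_commute: "eta $ a $ b = eta $ b $ a"
  using arg_cong[OF symmetric, of "\<lambda>A. A $ b $ a"] by (simp add: transpose_def)

lemma matrix_inv_commute: "matrix_inv eta $ a $ b = matrix_inv eta $ b $ a"
  using arg_cong[OF transpose_matrix_inv, of "\<lambda>A. A $ b $ a"] by (simp add: transpose_def)

lemma sum_eta_matrix_inv: "(\<Sum>c\<in>UNIV. eta $ b $ c * matrix_inv eta $ c $ d) = (if b = d then 1 else 0)"
  using eta_matrix_inv by (simp add: matrix_matrix_mult_def mat_def vec_eq_iff)

lemma sum_eta_Dup: "(\<Sum>c\<in>UNIV. eta $ b $ c * Dup eta c f m) = Dop b f m"
proof -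
  have "(\<Sum>c\<in>UNIV. eta $ b $ c * Dup eta c f m)
      = (\<Sum>d\<in>UNIV. (\<Sum>c\<in>UNIV. eta $ b $ c * matrix_inv eta $ c $ d) * Dop d f m)"
    unfolding Dup_def sum_distrib_left sum_distrib_right mult.assoc by (rule sum.swap)
  then show ?thesis
    by (simp add: sum_eta_matrix_inv if_distrib[of "\<lambda>x. x * _"] cong: if_cong)
qed

lemma Lap_Xop: "Lap eta (Xop c f) = (\<lambda>m. Xop c (Lap eta f) m + 2 * Dup eta c f m)"
proof
  fix m
  have "Dop a (Dop b (Xop c f)) m = Xop c (Dop a (Dop b f)) m
      + (if a = c then Dop b f m else 0) + (if b = c then Dop a f m else 0)" for a b
    by (cases "a = c"; cases "b = c") (simp_all add: Dop_Xop Dop_add)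
  then have "Lap eta (Xop c f) m = Xop c (Lap eta f) m
      + (\<Sum>a\<in>UNIV. \<Sum>b\<in>UNIV. matrix_inv eta $ a $ b * (if a = c then Dop b f m else 0))
      + (\<Sum>a\<in>UNIV. matrix_inv eta $ a $ c * Dop a f m)"
    by (simp add: Lap_def Xop_sum Xop_mult distrib_left sum.distrib sum_mult_delta)
  also have "(\<Sum>a\<in>UNIV. \<Sum>b\<in>UNIV. matrix_inv eta $ a $ b * (if a = c then Dop b f m else 0))
      = (\<Sum>b\<in>UNIV. matrix_inv eta $ c $ b * Dop b f m)"
    by (subst sum.swap) (simp add: sum_mult_delta)
  finally show "Lap eta (Xop c f) m = Xop c (Lap eta f) m + 2 * Dup eta c f m"
    by (simp add: Dup_def matrix_inv_commute[of _ c])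
qed

lemma Lap_Qop: "Lap eta (Qop eta f)
    = (\<lambda>m. Qop eta (Lap eta f) m + (4 * of_nat (mdeg m) + 2 * of_nat CARD('n)) * f m)"
proof
  fix m
  have Lap_XX: "Lap eta (Xop b (Xop c f)) m = Xop b (Xop c (Lap eta f)) m
      + 2 * Xop b (Dup eta c f) m + 2 * Xop c (Dup eta b f) m + 2 * matrix_inv eta $ b $ c * f m"
    for b c
    by (simp add: Lap_Xop Dup_Xop Xop_add Xop_mult algebra_simps)
  have Euler: "(\<Sum>b\<in>UNIV. \<Sum>c\<in>UNIV. eta $ b $ c * Xop b (Dup eta c f) m) = of_nat (mdeg m) * f m"
  proof -
    have "(\<Sum>b\<in>UNIV. \<Sum>c\<in>UNIV. eta $ b $ c * Xop b (Dup eta c f) m)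
        = (\<Sum>b\<in>UNIV. Xop b (\<lambda>k. \<Sum>c\<in>UNIV. eta $ b $ c * Dup eta c f k) m)"
      by (simp add: Xop_sum Xop_mult)
    also have "\<dots> = (\<Sum>b\<in>UNIV. Xop b (Dop b f) m)"
      by (simp add: sum_eta_Dup)
    finally show ?thesis
      using fun_cong[OF sum_Xop_Dop, of f m] by (simp add: scale_by_degree_def)
  qed
  have Euler': "(\<Sum>b\<in>UNIV. \<Sum>c\<in>UNIV. eta $ b $ c * Xop c (Dup eta b f) m) = of_nat (mdeg m) * f m"
    using Euler by (subst sum.swap) (simp add: eta_commute)
  have trace:
    "(\<Sum>b\<in>UNIV. \<Sum>c\<in>UNIV. eta $ b $ c * (matrix_inv eta $ b $ c * f m)) = of_nat CARD('n) * f m"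
  proof -
    have "eta $ b $ c * (matrix_inv eta $ b $ c * f m) = eta $ b $ c * matrix_inv eta $ c $ b * f m"
      for b c
      using matrix_inv_commute[of b c] by simp
    then have "(\<Sum>b\<in>UNIV. \<Sum>c\<in>UNIV. eta $ b $ c * (matrix_inv eta $ b $ c * f m))
        = (\<Sum>b\<in>UNIV. (\<Sum>c\<in>UNIV. eta $ b $ c * matrix_inv eta $ c $ b) * f m)"
      by (simp only: sum_distrib_right)
    then show ?thesis
      by (simp add: sum_eta_matrix_inv)
  qed
  have "Lap eta (Qop eta f) m = (\<Sum>b\<in>UNIV. \<Sum>c\<in>UNIV. eta $ b $ c * Lap eta (Xop b (Xop c f)) m)"
    by (simp add: Qop_def Lap_sum Lap_mult)
  also have "\<dots> = Qop eta (Lap eta f) m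
      + 2 * (\<Sum>b\<in>UNIV. \<Sum>c\<in>UNIV. eta $ b $ c * Xop b (Dup eta c f) m)
      + 2 * (\<Sum>b\<in>UNIV. \<Sum>c\<in>UNIV. eta $ b $ c * Xop c (Dup eta b f) m)
      + 2 * (\<Sum>b\<in>UNIV. \<Sum>c\<in>UNIV. eta $ b $ c * (matrix_inv eta $ b $ c * f m))"
    by (simp add: Qop_def Lap_XX distrib_left sum.distrib sum_distrib_left mult_ac)
  also have "\<dots> = Qop eta (Lap eta f) m + (4 * of_nat (mdeg m) + 2 * of_nat CARD('n)) * f m"
    by (simp only: Euler Euler' trace) (simp add: algebra_simps)
  finally show "Lap eta (Qop eta f) m
      = Qop eta (Lap eta f) m + (4 * of_nat (mdeg m) + 2 * of_nat CARD('n)) * f m" .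
qed

lemma Fplus_Xtil:
  assumes "f \<in> Fplus eta"
  shows "Xtil eta c f \<in> Fplus eta"
proof -
  define \<psi> where "\<psi> = Dup eta c f"
  have "Lap eta f = (\<lambda>m. 0)" and "f \<in> polys"
    using assms by (simp_all add: Fplus_def)
  then have "Lap eta \<psi> = (\<lambda>m. 0)" and Lap_x: "Lap eta (Xop c f) = (\<lambda>m. 2 * \<psi> m)"
    by (simp_all add: \<psi>_def harmonic_Dup Lap_Xop Xop_zero)
  have Lap_correction: "Lap eta (R2H4inv (Qop eta \<psi>)) m = - 2 * \<psi> m" for m
  proof -
    define X :: complex where "X = 2 * of_nat (mdeg m) + of_nat CARD('n)"
    have "X \<noteq> 0"
      using of_nat_eq_0_iff[of "2 * mdeg m + CARD('n)", where 'a = complex] by (simp add: X_def)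
    have "Lap eta (R2H4inv (Qop eta \<psi>)) m
        = (4 * of_nat (mdeg m) + 2 * of_nat CARD('n)) * \<psi> m
          / (4 - 2 * of_nat (mdeg m + 2) - of_nat CARD('n))"
      using \<open>Lap eta \<psi> = (\<lambda>m. 0)\<close>
      by (simp add: R2H4inv_eq_scale_by_degree Lap_scale_by_degree Lap_Qop Qop_zero)
        (simp add: scale_by_degree_def)
    also have "\<dots> = 2 * X * \<psi> m / - X"
      by (simp add: X_def algebra_simps)
    finally show ?thesis
      using \<open>X \<noteq> 0\<close> by simp
  qed
  then have "Lap eta (Xtil eta c f) = (\<lambda>m. 0)"
    by (simp add: Xtil_def Lap_add Lap_x \<psi>_def[symmetric] Lap_correction)
  then show ?thesis
    using \<open>f \<in> polys\<close> by (simp add: Fplus_def polys_Xtil)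
qed

end

subsection \<open>Irreducibility\<close>

lemma
  assumes "csubspace W"
  shows csubspace_zero: "(\<lambda>m. 0) \<in> W"
    and csubspace_add: "f \<in> W \<Longrightarrow> g \<in> W \<Longrightarrow> (\<lambda>m. f m + g m) \<in> W"
    and csubspace_scale: "f \<in> W \<Longrightarrow> (\<lambda>m. k * f m) \<in> W"
  using assms by (simp_all add: csubspace_def)

lemma csubspace_sum:
  assumes "csubspace W" and "\<And>i. i \<in> A \<Longrightarrow> F i \<in> W"
  shows "(\<lambda>m. \<Sum>i\<in>A. F i m) \<in> W"
  using assms(2)
proof (induction A rule: infinite_finite_induct)
  case (insert i A)
  then show ?case
    using csubspace_add[OF assms(1)] by simp
qed (simp_all add: csubspace_zero[OF assms(1)])

definition const_coeffs :: "complex \<Rightarrow> 'n coeffs" where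
  "const_coeffs k = (\<lambda>m. if m = (\<lambda>_. 0) then k else 0)"

lemma degree_below_Dop: "degree_below (Suc d) f \<Longrightarrow> degree_below d (Dop a f)"
  by (auto simp: degree_below_def Dop_def)

lemma degree_below_1: "degree_below 1 f \<Longrightarrow> f = const_coeffs (f (\<lambda>_. 0))"
  by (rule ext) (auto simp: degree_below_def const_coeffs_def mdeg_eq_0_iff)

lemma Dop_eq_0_imp_const:
  assumes "\<And>a. Dop a f = (\<lambda>m. 0)"
  shows "f = const_coeffs (f (\<lambda>_. 0))"
proof
  fix m
  show "f m = const_coeffs (f (\<lambda>_. 0)) m"
  proof (cases "m = (\<lambda>_. 0)")
    case False
    then obtain a where "0 < m a"
      by (auto simp: fun_eq_iff)
    then have "Dop a f (m(a := m a - 1)) = of_nat (m a) * f m"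
      by (simp add: Dop_def)
    then show ?thesis
      using assms \<open>0 < m a\<close> False by (simp add: const_coeffs_def)
  qed (simp add: const_coeffs_def)
qed

lemma const_coeffs_mem_Dop_invariant:
  assumes W: "csubspace W" and D: "\<And>a f. f \<in> W \<Longrightarrow> Dop a f \<in> W"
    and "f \<in> W" and "f \<noteq> (\<lambda>m. 0)" and "degree_below d f"
  shows "const_coeffs k \<in> W"
  using assms(3-)
proof (induction d arbitrary: f)
  case (Suc d)
  show ?case
  proof (cases "\<exists>a. Dop a f \<noteq> (\<lambda>m. 0)")
    case True
    then obtain a where "Dop a f \<noteq> (\<lambda>m. 0)"
      by blast
    then show ?thesis
      using Suc.IH[OF D[OF Suc.prems(1)] _ degree_below_Dop[OF Suc.prems(3)]] by blast
  next
    case False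
    then have f_const: "f = const_coeffs (f (\<lambda>_. 0))"
      by (intro Dop_eq_0_imp_const) blast
    have "f (\<lambda>_. 0) \<noteq> 0"
    proof
      assume "f (\<lambda>_. 0) = 0"
      then have "f = const_coeffs 0"
        using f_const by simp
      with \<open>f \<noteq> (\<lambda>m. 0)\<close> show False
        by (simp add: const_coeffs_def)
    qed
    then have "const_coeffs k = (\<lambda>m. k / f (\<lambda>_. 0) * f m)"
      by (subst f_const) (simp add: const_coeffs_def fun_eq_iff)
    then show ?thesis
      using csubspace_scale[OF W \<open>f \<in> W\<close>, of "k / f (\<lambda>_. 0)"] by (simp only:)
  qed
qed (simp add: degree_below_0)

lemma Fplus_subset_invariant:
  assumes W: "csubspace W" and D: "\<And>a f. f \<in> W \<Longrightarrow> Dop a f \<in> W"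
    and X: "\<And>a f. f \<in> W \<Longrightarrow> Xtil eta a f \<in> W" and C: "\<And>k. const_coeffs k \<in> W"
  shows "Fplus eta \<subseteq> W"
proof
  have harmonic_mem: "f \<in> W" if "f \<in> Fplus eta" and "degree_below d f" for f d
    using that
  proof (induction d arbitrary: f)
    case 0
    then show ?case
      using csubspace_zero[OF W] by (simp add: degree_below_0)
  next
    case (Suc d)
    show ?case
    proof (cases "d = 0")
      case True
      then show ?thesis
        using C[of "f (\<lambda>_. 0)"] degree_below_1[of f] Suc.prems(2) by simp
    next
      case False
      have "Dop a f \<in> W" for a
        using Suc.IH[OF Fplus_Dop[OF Suc.prems(1)] degree_below_Dop[OF Suc.prems(2)]] .
      then have "(\<lambda>m. \<Sum>a\<in>UNIV. Xtil eta a (Dop a f) m) \<in> W"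
        by (intro csubspace_sum[OF W] X)
      then have Ef: "scale_by_degree of_nat f \<in> W"
        using Suc.prems(1) by (simp add: Fplus_def sum_Xtil_Dop_harmonic)
      define g where "g = scale_by_degree (\<lambda>k. of_nat k - of_nat d) f"
      have "g \<in> Fplus eta"
        using Suc.prems(1) by (simp add: g_def Fplus_scale_by_degree)
      moreover have "degree_below d g"
        using Suc.prems(2) by (auto simp: degree_below_def g_def scale_by_degree_def)
      ultimately have "g \<in> W"
        by (rule Suc.IH)
      have "(\<lambda>m. scale_by_degree of_nat f m + (-1) * g m) \<in> W"
        by (intro csubspace_add[OF W Ef] csubspace_scale[OF W \<open>g \<in> W\<close>])
      then have "(\<lambda>m. 1 / of_nat d * (scale_by_degree of_nat f m + (-1) * g m)) \<in> W"
        by (rule csubspace_scale[OF W])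
      moreover have "(\<lambda>m. 1 / of_nat d * (scale_by_degree of_nat f m + (-1) * g m)) = f"
        using False by (simp add: g_def scale_by_degree_def fun_eq_iff field_simps)
      ultimately show ?thesis
        by simp
    qed
  qed
  fix f
  assume "f \<in> Fplus eta"
  then obtain d where "degree_below d f"
    using polys_degree_below by (auto simp: Fplus_def)
  with \<open>f \<in> Fplus eta\<close> show "f \<in> W"
    by (rule harmonic_mem)
qed

lemma Zalg_invariant_subspace_trivial:
  assumes "W \<subseteq> Fplus eta" and W: "csubspace W"
    and inv: "\<forall>T\<in>Zalg eta. \<forall>f\<in>W. T f \<in> W"
  shows "W = {\<lambda>m. 0} \<or> W = Fplus eta"
proof (cases "W = {\<lambda>m. 0}")
  case False
  then obtain f where "f \<in> W" and "f \<noteq> (\<lambda>m. 0)"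
    using csubspace_zero[OF W] by blast
  moreover obtain d where "degree_below d f"
    using \<open>f \<in> W\<close> assms(1) polys_degree_below by (auto simp: Fplus_def)
  moreover have D: "\<And>a f. f \<in> W \<Longrightarrow> Dop a f \<in> W"
    and X: "\<And>a f. f \<in> W \<Longrightarrow> Xtil eta a f \<in> W"
    using inv Zalg.gen_D Zalg.gen_X by blast+
  ultimately have "\<And>k. const_coeffs k \<in> W"
    using const_coeffs_mem_Dop_invariant[OF W D] by blast
  then have "Fplus eta \<subseteq> W"
    using Fplus_subset_invariant[OF W D X] by blast
  with assms(1) show ?thesis
    by blast
qed simp

theorem mainTheorem10:
  fixes eta :: "complex^'n::finite^'n"
  assumes "CARD('n) \<ge> 3"
    and "invertible eta"
    and "transpose eta = eta"
  shows "(\<forall>f\<in>Fplus eta. Hop f \<in> Fplus eta)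
       \<and> (\<forall>a. \<forall>f\<in>Fplus eta. Dop a f \<in> Fplus eta)
       \<and> (\<forall>a. \<forall>f\<in>Fplus eta. Xtil eta a f \<in> Fplus eta)
       \<and> (\<forall>W. W \<subseteq> Fplus eta \<and> csubspace W \<and> (\<forall>T\<in>Zalg eta. \<forall>f\<in>W. T f \<in> W)
              \<longrightarrow> W = {\<lambda>m. 0} \<or> W = Fplus eta)"
proof -
  interpret nondegenerate_symmetric_form eta
    using assms(2,3) by unfold_locales
  show ?thesis
    using Zalg_invariant_subspace_trivial[of _ eta] by (simp add: Fplus_Hop Fplus_Dop Fplus_Xtil)
qed

end
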